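(* Let $\mathsf{A}$ and $\mathsf{B}$ be density matrices on the same finite-dimensional complex Hilbert space with $\operatorname{rank}(\mathsf{A}) = \operatorname{rank}(\mathsf{B})$, and let $k \in [0,1]$. Then $$\mathsf{A} \sqsubseteq_k \mathsf{B} \iff \neg_{supp}\mathsf{B} \sqsubseteq_k \neg_{supp}\mathsf{A}.$$
   Context: A density matrix is a positive semidefinite Hermitian matrix of trace $1$. A Hermitian matrix $M$ is called positive, written $M \geq 0$, if it is positive semidefinite. For Hermitian matrices $\mathsf{X}, \mathsf{Y}$ and a real number $k \in [0,1]$, $k$-hyponymy is defined by $\mathsf{X} \sqsubseteq_k \mathsf{Y}$ iff $\mathsf{Y} - k\mathsf{X} \geq 0$. The support inverse of a positive semidefinite matrix $\mathsf{X}$ with spectral decomposition $\mathsf{X} = \sum_i \lambda_i |i\rangle\langle i|$ (orthonormal eigenbasis $\{|i\rangle\}$) is $\neg_{supp}\mathsf{X} = \sum_{i:\lambda_i \neq 0} \lambda_i^{-1} |i\rangle\langle i|$, i.e. the Moore–Penrose pseudoinverse of $\mathsf{X}$; it has the same eigenbasis as $\mathsf{X}$, inverts the nonzero eigenvalues, and is zero on the kernel of $\mathsf{X}$. *)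

theory Defs
  imports "Jordan_Normal_Form.Schur_Decomposition" "Jordan_Normal_Form.DL_Rank"
begin

definition ctrans :: "complex mat \<Rightarrow> complex mat" where
  "ctrans A = mat (dim_col A) (dim_row A) (\<lambda>(i,j). cnj (A $$ (j,i)))"

definition hermitian_mat :: "nat \<Rightarrow> complex mat \<Rightarrow> bool" where
  "hermitian_mat n M \<longleftrightarrow> M \<in> carrier_mat n n \<and> ctrans M = M"

definition psd_mat :: "nat \<Rightarrow> complex mat \<Rightarrow> bool" where
  "psd_mat n M \<longleftrightarrow> hermitian_mat n M \<and>
     (\<forall>v \<in> carrier_vec n. let q = conjugate v \<bullet> (M *\<^sub>v v) in Im q = 0 \<and> Re q \<ge> 0)"

definition mat_trace :: "complex mat \<Rightarrow> complex" where
  "mat_trace M = (\<Sum>i<dim_row M. M $$ (i,i))"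

definition density_mat :: "nat \<Rightarrow> complex mat \<Rightarrow> bool" where
  "density_mat n M \<longleftrightarrow> psd_mat n M \<and> mat_trace M = 1"

definition k_hyponym :: "nat \<Rightarrow> real \<Rightarrow> complex mat \<Rightarrow> complex mat \<Rightarrow> bool" where
  "k_hyponym n k X Y \<longleftrightarrow> psd_mat n (Y - complex_of_real k \<cdot>\<^sub>m X)"

definition unitary_mat :: "nat \<Rightarrow> complex mat \<Rightarrow> bool" where
  "unitary_mat n U \<longleftrightarrow> U \<in> carrier_mat n n \<and> U * ctrans U = 1\<^sub>m n \<and> ctrans U * U = 1\<^sub>m n"

definition diag_supp_inv :: "complex mat \<Rightarrow> complex mat" where
  "diag_supp_inv D = mat (dim_row D) (dim_col D)
     (\<lambda>(i,j). if i = j \<and> D $$ (i,i) \<noteq> 0 then inverse (D $$ (i,i)) else 0)"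

definition supp_inv :: "nat \<Rightarrow> complex mat \<Rightarrow> complex mat" where
  "supp_inv n X = (THE Y. \<exists>U D. unitary_mat n U \<and> D \<in> carrier_mat n n \<and> diagonal_mat D \<and>
       X = U * D * ctrans U \<and> Y = U * diag_supp_inv D * ctrans U)"

definition mat_rank :: "nat \<Rightarrow> complex mat \<Rightarrow> nat" where
  "mat_rank n A = vec_space.rank n A"

end

theory Submission
  imports Defs
begin

(* For positive semidefinite X the support inverse X^+ is the group inverse of X: the unique
   matrix that commutes with X and satisfies X X^+ X = X and X^+ X X^+ = X^+.  It is again
   positive, has the same column space as X, and X^++ = X.

   If Y - k X >= 0 with k > 0, every vector annihilated by Y is annihilated by X, so the column
   space of X lies in that of Y; equal ranks make the column spaces, hence the support
   projections X X^+ = Y Y^+, coincide.  Then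
     X^+ - k Y^+ = C X C + k Y^+ (Y - k X) Y^+,   where C = k Y^+ - X^+,
   is a sum of positive matrices.  Applied to the pair (B^+, A^+) this gives the converse, and
   for k = 0 both sides merely say that a matrix is positive. *)

section \<open>Conjugate transpose, Hermitian and unitary matrices\<close>

lemma dim_row_ctrans[simp]: "dim_row (ctrans A) = dim_col A"
  and dim_col_ctrans[simp]: "dim_col (ctrans A) = dim_row A"
  by (simp_all add: ctrans_def)

lemma index_ctrans[simp]: "i < dim_col A \<Longrightarrow> j < dim_row A \<Longrightarrow> ctrans A $$ (i, j) = cnj (A $$ (j, i))"
  by (simp add: ctrans_def)

lemma ctrans_carrier_mat[simp]: "ctrans A \<in> carrier_mat m n \<longleftrightarrow> A \<in> carrier_mat n m"
  by (metis carrier_matD carrier_matI dim_row_ctrans dim_col_ctrans)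

lemma ctrans_ctrans[simp]: "ctrans (ctrans A) = A"
  by (rule eq_matI) auto

lemma ctrans_one[simp]: "ctrans (1\<^sub>m n) = 1\<^sub>m n"
  by (rule eq_matI) auto

lemma ctrans_mult:
  assumes "A \<in> carrier_mat n k" "B \<in> carrier_mat k m"
  shows "ctrans (A * B) = ctrans B * ctrans A"
  using assms by (intro eq_matI) (auto simp: scalar_prod_def intro!: sum.cong)

lemma ctrans_add:
  assumes "A \<in> carrier_mat n m" "B \<in> carrier_mat n m"
  shows "ctrans (A + B) = ctrans A + ctrans B"
  using assms by (intro eq_matI) auto

lemma ctrans_minus:
  assumes "A \<in> carrier_mat n m" "B \<in> carrier_mat n m"
  shows "ctrans (A - B) = ctrans A - ctrans B"
  using assms by (intro eq_matI) auto

lemma ctrans_smult: "ctrans (c \<cdot>\<^sub>m A) = cnj c \<cdot>\<^sub>m ctrans A"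
  by (intro eq_matI) auto

lemma inner_ctrans_mult_vec:
  assumes "B \<in> carrier_mat n m" "v \<in> carrier_vec m" "w \<in> carrier_vec n"
  shows "conjugate v \<bullet> (ctrans B *\<^sub>v w) = conjugate (B *\<^sub>v v) \<bullet> w"
proof -
  have "conjugate v \<bullet> (ctrans B *\<^sub>v w) = (\<Sum>i<m. cnj (v $ i) * (\<Sum>j<n. cnj (B $$ (j, i)) * w $ j))"
    using assms by (simp add: scalar_prod_def lessThan_atLeast0)
  also have "\<dots> = (\<Sum>i<m. \<Sum>j<n. cnj (v $ i) * cnj (B $$ (j, i)) * w $ j)"
    by (simp add: sum_distrib_left mult.assoc)
  also have "\<dots> = (\<Sum>j<n. \<Sum>i<m. cnj (v $ i) * cnj (B $$ (j, i)) * w $ j)"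
    by (rule sum.swap)
  also have "\<dots> = (\<Sum>j<n. cnj (\<Sum>i<m. B $$ (j, i) * v $ i) * w $ j)"
    by (simp add: sum_distrib_left mult_ac)
  also have "\<dots> = conjugate (B *\<^sub>v v) \<bullet> w"
    using assms by (simp add: scalar_prod_def lessThan_atLeast0)
  finally show ?thesis .
qed

lemma hermitian_matD:
  assumes "hermitian_mat n M"
  shows "M \<in> carrier_mat n n" "ctrans M = M"
  using assms by (simp_all add: hermitian_mat_def)

lemma hermitian_congruence:
  assumes M: "hermitian_mat n M" and B: "B \<in> carrier_mat n m"
  shows "hermitian_mat m (ctrans B * M * B)"
proof -
  have Mc: "M \<in> carrier_mat n n" and hM: "ctrans M = M" using hermitian_matD[OF M] by auto
  have "ctrans (ctrans B * M * B) = ctrans B * ctrans (ctrans B * M)"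
    using Mc B by (intro ctrans_mult[of _ m n _ m]) auto
  also have "ctrans (ctrans B * M) = ctrans M * B"
    using ctrans_mult[of "ctrans B" m n M n] Mc B by simp
  also have "ctrans B * (ctrans M * B) = ctrans B * M * B"
    using hM Mc B by (simp add: assoc_mult_mat[of _ m n _ n _ m])
  finally show ?thesis using Mc B by (simp add: hermitian_mat_def)
qed

lemma unitary_matD:
  assumes "unitary_mat n U"
  shows "U \<in> carrier_mat n n" "ctrans U * U = 1\<^sub>m n" "U * ctrans U = 1\<^sub>m n"
  using assms by (simp_all add: unitary_mat_def)

lemma unitary_matI:
  assumes "U \<in> carrier_mat n n" "ctrans U * U = 1\<^sub>m n"
  shows "unitary_mat n U"
  using assms mat_mult_left_right_inverse[of "ctrans U" n U] by (simp add: unitary_mat_def)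

lemma unitary_mult:
  assumes U: "unitary_mat n U" and V: "unitary_mat n V"
  shows "unitary_mat n (U * V)"
proof (rule unitary_matI)
  have Uc: "U \<in> carrier_mat n n" and Vc: "V \<in> carrier_mat n n" using U V by (simp_all add: unitary_mat_def)
  show "U * V \<in> carrier_mat n n" using Uc Vc by simp
  have "ctrans (U * V) * (U * V) = ctrans V * ((ctrans U * U) * V)"
    using Uc Vc by (simp add: ctrans_mult[OF Uc Vc] assoc_mult_mat[of _ n n _ n _ n])
  also have "\<dots> = 1\<^sub>m n" using unitary_matD[OF U] unitary_matD[OF V] Vc by simp
  finally show "ctrans (U * V) * (U * V) = 1\<^sub>m n" .
qed

lemma unitary_conj_mult:
  assumes U: "unitary_mat n U" and A: "A \<in> carrier_mat n n" and B: "B \<in> carrier_mat n n"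
  shows "(U * A * ctrans U) * (U * B * ctrans U) = U * (A * B) * ctrans U"
proof -
  have Uc: "U \<in> carrier_mat n n" using unitary_matD[OF U] by simp
  have "(U * A * ctrans U) * (U * B * ctrans U) = U * (A * ((ctrans U * U) * (B * ctrans U)))"
    using Uc A B by (simp add: assoc_mult_mat[of _ n n _ n _ n])
  also have "\<dots> = U * (A * B) * ctrans U"
    using Uc A B unitary_matD[OF U] by (simp add: assoc_mult_mat[of _ n n _ n _ n])
  finally show ?thesis .
qed

lemma unitary_conj_cancel:
  assumes U: "unitary_mat n U" and D: "D \<in> carrier_mat n n"
  shows "ctrans U * (U * D * ctrans U) * U = D"
proof -
  have Uc: "U \<in> carrier_mat n n" using unitary_matD(1)[OF U] .
  have "ctrans U * (U * D * ctrans U) * U = (ctrans U * U) * D * (ctrans U * U)"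
    using Uc D by (simp add: assoc_mult_mat[of _ n n _ n _ n])
  then show ?thesis using D unfolding unitary_matD(2)[OF U] by simp
qed

section \<open>Positive semidefinite matrices\<close>

definition quad_form :: "complex mat \<Rightarrow> complex vec \<Rightarrow> complex" where
  "quad_form M v = conjugate v \<bullet> (M *\<^sub>v v)"

(* In the order of HOL-Library.Complex_Order, 0 <= z says that z is real and nonnegative,
   which is the condition on the quadratic form in psd_mat_def. *)
lemma psd_mat_iff_quad_form:
  "psd_mat n M \<longleftrightarrow> hermitian_mat n M \<and> (\<forall>v \<in> carrier_vec n. 0 \<le> quad_form M v)"
  by (auto simp: psd_mat_def quad_form_def less_eq_complex_def Let_def)

lemma psd_matI:
  assumes "hermitian_mat n M" "\<And>v. v \<in> carrier_vec n \<Longrightarrow> 0 \<le> quad_form M v"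
  shows "psd_mat n M"
  using assms by (simp add: psd_mat_iff_quad_form)

lemma psd_matD:
  assumes "psd_mat n M"
  shows "hermitian_mat n M" "M \<in> carrier_mat n n" "ctrans M = M"
    "v \<in> carrier_vec n \<Longrightarrow> 0 \<le> quad_form M v"
  using assms by (simp_all add: psd_mat_iff_quad_form hermitian_mat_def)

lemma quad_form_congruence:
  assumes B: "B \<in> carrier_mat n m" and M: "M \<in> carrier_mat n n" and v: "v \<in> carrier_vec m"
  shows "quad_form (ctrans B * M * B) v = quad_form M (B *\<^sub>v v)"
proof -
  have "(ctrans B * M * B) *\<^sub>v v = ctrans B *\<^sub>v (M *\<^sub>v (B *\<^sub>v v))"
    using assms by (simp add: assoc_mult_mat_vec[of _ m n _ m] assoc_mult_mat_vec[of _ n n _ m])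
  then show ?thesis using assms by (simp add: quad_form_def inner_ctrans_mult_vec)
qed

lemma quad_form_add:
  assumes "M \<in> carrier_mat n n" "N \<in> carrier_mat n n" "v \<in> carrier_vec n"
  shows "quad_form (M + N) v = quad_form M v + quad_form N v"
  using assms by (simp add: quad_form_def add_mult_distrib_mat_vec scalar_prod_add_distrib[of _ n])

lemma quad_form_minus:
  assumes "M \<in> carrier_mat n n" "N \<in> carrier_mat n n" "v \<in> carrier_vec n"
  shows "quad_form (M - N) v = quad_form M v - quad_form N v"
  using assms by (simp add: quad_form_def minus_mult_distrib_mat_vec scalar_prod_minus_distrib[of _ n])

lemma quad_form_smult:
  assumes "M \<in> carrier_mat n n" "v \<in> carrier_vec n"
  shows "quad_form (c \<cdot>\<^sub>m M) v = c * quad_form M v"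
proof -
  have "(c \<cdot>\<^sub>m M) *\<^sub>v v = c \<cdot>\<^sub>v (M *\<^sub>v v)"
    using assms by (intro eq_vecI) (auto simp: scalar_prod_def sum_distrib_left mult.assoc)
  then show ?thesis using assms by (simp add: quad_form_def)
qed

lemma quad_form_unit_vec:
  assumes "D \<in> carrier_mat n n" "i < n"
  shows "quad_form D (unit_vec n i) = D $$ (i, i)"
proof -
  have "conjugate (unit_vec n i) = (unit_vec n i :: complex vec)"
    using assms(2) by (intro eq_vecI) auto
  then show ?thesis using assms by (simp add: quad_form_def)
qed

lemma psd_congruence:
  assumes M: "psd_mat n M" and B: "B \<in> carrier_mat n m"
  shows "psd_mat m (ctrans B * M * B)"
proof (rule psd_matI)
  show "hermitian_mat m (ctrans B * M * B)" using hermitian_congruence[OF psd_matD(1)[OF M] B] .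
  show "0 \<le> quad_form (ctrans B * M * B) v" if v: "v \<in> carrier_vec m" for v
    unfolding quad_form_congruence[OF B psd_matD(2)[OF M] v]
    using B v by (rule psd_matD(4)[OF M, OF mult_mat_vec_carrier])
qed

lemma psd_add:
  assumes M: "psd_mat n M" and N: "psd_mat n N"
  shows "psd_mat n (M + N)"
proof (rule psd_matI)
  show "hermitian_mat n (M + N)"
    using psd_matD[OF M] psd_matD[OF N] by (simp add: hermitian_mat_def ctrans_add)
  show "0 \<le> quad_form (M + N) v" if v: "v \<in> carrier_vec n" for v
    unfolding quad_form_add[OF psd_matD(2)[OF M] psd_matD(2)[OF N] v]
    using psd_matD(4)[OF M v] psd_matD(4)[OF N v] by (rule add_nonneg_nonneg)
qed

lemma psd_smult:
  assumes M: "psd_mat n M" and k: "0 \<le> k"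
  shows "psd_mat n (complex_of_real k \<cdot>\<^sub>m M)"
proof (rule psd_matI)
  show "hermitian_mat n (complex_of_real k \<cdot>\<^sub>m M)"
    using psd_matD[OF M] by (simp add: hermitian_mat_def ctrans_smult)
  show "0 \<le> quad_form (complex_of_real k \<cdot>\<^sub>m M) v" if v: "v \<in> carrier_vec n" for v
    unfolding quad_form_smult[OF psd_matD(2)[OF M] v]
    using k psd_matD(4)[OF M v] by (intro mult_nonneg_nonneg) (simp_all add: less_eq_complex_def)
qed

section \<open>Spectral theorem\<close>

lemma eigenvector_exists:
  fixes A :: "complex mat"
  assumes A: "A \<in> carrier_mat n n" and n: "0 < n"
  obtains e v where "v \<in> carrier_vec n" "v \<noteq> 0\<^sub>v n" "A *\<^sub>v v = e \<cdot>\<^sub>v v"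
proof -
  obtain es where cp: "char_poly A = (\<Prod>a\<leftarrow>es. [:- a, 1:])" and len: "length es = n"
    using char_poly_factorized[OF A] by blast
  obtain e es' where "es = e # es'" using len n by (cases es) auto
  then have "eigenvalue A e"
    using eigenvalue_root_char_poly[OF A] cp by simp
  then show ?thesis using that A unfolding eigenvalue_def eigenvector_def by auto
qed

lemma unitary_mat_of_corthogonal:
  fixes ws :: "complex vec list"
  assumes ws: "corthogonal ws" "set ws \<subseteq> carrier_vec n" "length ws = n"
  shows "unitary_mat n (mat_of_cols n (map (\<lambda>w. complex_of_real (1 / sqrt (Re (w \<bullet>c w))) \<cdot>\<^sub>v w) ws))"
    (is "unitary_mat n ?W")
proof -
  define W where "W = ?W"
  have wsi: "ws ! i \<in> carrier_vec n" if "i < n" for i using ws that by auto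
  define r where "r i = Re (ws ! i \<bullet>c ws ! i)" for i
  have r: "ws ! i \<bullet>c ws ! i = complex_of_real (r i)" "0 < r i" if i: "i < n" for i
  proof -
    have "0 \<le> ws ! i \<bullet>c ws ! i" by (rule conjugate_square_ge_0_vec)
    moreover have "ws ! i \<bullet>c ws ! i \<noteq> 0" using corthogonalD[OF ws(1), of i i] i ws(3) by auto
    ultimately show "ws ! i \<bullet>c ws ! i = complex_of_real (r i)" "0 < r i"
      unfolding r_def by (auto simp: less_eq_complex_def complex_eq_iff)
  qed
  have Wc: "W \<in> carrier_mat n n" unfolding W_def by (rule carrier_matI) (simp_all add: ws(3))
  have Wij: "W $$ (l, i) = complex_of_real (1 / sqrt (r i)) * ws ! i $ l" if "l < n" "i < n" for l i
    unfolding W_def using that wsi[OF that(2)] ws(3) by (simp add: mat_of_cols_index r_def)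
  have "ctrans W * W = 1\<^sub>m n"
  proof (rule eq_matI)
    fix i j assume "i < dim_row (1\<^sub>m n)" "j < dim_col (1\<^sub>m n)"
    then have i: "i < n" and j: "j < n" by auto
    have "(ctrans W * W) $$ (i, j) = (\<Sum>l<n. cnj (W $$ (l, i)) * W $$ (l, j))"
      using Wc i j by (simp add: scalar_prod_def lessThan_atLeast0)
    also have "\<dots> = complex_of_real (1 / sqrt (r i)) * complex_of_real (1 / sqrt (r j)) * (ws ! j \<bullet>c ws ! i)"
      using i j wsi[OF i] wsi[OF j]
      by (simp add: Wij scalar_prod_def sum_distrib_left lessThan_atLeast0 mult_ac)
    also have "\<dots> = 1\<^sub>m n $$ (i, j)"
    proof (cases "i = j")
      case True
      have "sqrt (r i) * sqrt (r i) = r i" using r(2)[OF i] by simp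
      then show ?thesis using True r[OF i] i
        by (simp add: field_simps of_real_mult[symmetric] del: of_real_mult)
    next
      case False
      then show ?thesis using corthogonalD[OF ws(1), of j i] i j ws(3) by simp
    qed
    finally show "(ctrans W * W) $$ (i, j) = 1\<^sub>m n $$ (i, j)" .
  qed (use Wc in auto)
  then show ?thesis using Wc unfolding W_def by (rule unitary_matI[rotated])
qed

lemma unitary_with_first_column:
  fixes v :: "complex vec"
  assumes v: "v \<in> carrier_vec n" and v0: "v \<noteq> 0\<^sub>v n"
  obtains W c where "unitary_mat n W" "col W 0 = c \<cdot>\<^sub>v v"
proof -
  interpret cof_vec_space n "TYPE(complex)" .
  have n0: "0 < n"
    using v v0 by (metis carrier_vecD eq_vecI gr0I index_zero_vec(2) less_nat_zero_code)
  from basis_completion[OF v v0] obtain vs where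
    b: "set (v # vs) \<subseteq> carrier_vec n" "distinct (v # vs)" "\<not> lin_dep (set (v # vs))" "length (v # vs) = n"
    by (metis basis_completion(3) list.exhaust list.sel(1) list.size(3) n0 not_less0)
  define ws where "ws = gram_schmidt n (v # vs)"
  from gram_schmidt_result[OF b(1-3) ws_def] b(4)
  have ws: "corthogonal ws" "set ws \<subseteq> carrier_vec n" "length ws = n" by auto
  have ws0: "ws ! 0 = v" using gram_schmidt_hd[OF v, of vs] ws(3) n0
    unfolding ws_def by (metis hd_conv_nth list.size(3) less_not_refl2)
  let ?W = "mat_of_cols n (map (\<lambda>w. complex_of_real (1 / sqrt (Re (w \<bullet>c w))) \<cdot>\<^sub>v w) ws)"
  have "col ?W 0 = complex_of_real (1 / sqrt (Re (v \<bullet>c v))) \<cdot>\<^sub>v v"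
    using n0 ws0 ws(3) v by (subst col_mat_of_cols) auto
  then show ?thesis using that unitary_mat_of_corthogonal[OF ws] by blast
qed

lemma ctrans_four_block_diag:
  assumes "A \<in> carrier_mat n1 n1" "D \<in> carrier_mat n2 n2"
  shows "ctrans (four_block_mat A (0\<^sub>m n1 n2) (0\<^sub>m n2 n1) D)
    = four_block_mat (ctrans A) (0\<^sub>m n1 n2) (0\<^sub>m n2 n1) (ctrans D)"
  using assms by (intro eq_matI) auto

lemma mult_four_block_diag:
  assumes "A1 \<in> carrier_mat n1 n1" "D1 \<in> carrier_mat n2 n2"
    "A2 \<in> carrier_mat n1 n1" "D2 \<in> carrier_mat n2 n2"
  shows "four_block_mat A1 (0\<^sub>m n1 n2) (0\<^sub>m n2 n1) D1 * four_block_mat A2 (0\<^sub>m n1 n2) (0\<^sub>m n2 n1) D2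
    = four_block_mat (A1 * A2) (0\<^sub>m n1 n2) (0\<^sub>m n2 n1) (D1 * D2)"
  by (subst mult_four_block_mat[OF assms(1) _ _ assms(2,3) _ _ assms(4)]) (use assms in auto)

lemma four_block_diag_conj:
  assumes A: "A \<in> carrier_mat n1 n1" and U: "U \<in> carrier_mat n2 n2" and D: "D \<in> carrier_mat n2 n2"
  shows "four_block_mat (1\<^sub>m n1) (0\<^sub>m n1 n2) (0\<^sub>m n2 n1) U * four_block_mat A (0\<^sub>m n1 n2) (0\<^sub>m n2 n1) D
      * ctrans (four_block_mat (1\<^sub>m n1) (0\<^sub>m n1 n2) (0\<^sub>m n2 n1) U)
    = four_block_mat A (0\<^sub>m n1 n2) (0\<^sub>m n2 n1) (U * D * ctrans U)"
  unfolding ctrans_four_block_diag[OF one_carrier_mat U]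
  using assms by (simp add: mult_four_block_diag)

lemma unitary_four_block_diag:
  assumes U1: "unitary_mat n1 U1" and U2: "unitary_mat n2 U2"
  shows "unitary_mat (n1 + n2) (four_block_mat U1 (0\<^sub>m n1 n2) (0\<^sub>m n2 n1) U2)"
proof (rule unitary_matI)
  have c: "U1 \<in> carrier_mat n1 n1" "U2 \<in> carrier_mat n2 n2"
    using unitary_matD(1) U1 U2 by auto
  then show "four_block_mat U1 (0\<^sub>m n1 n2) (0\<^sub>m n2 n1) U2 \<in> carrier_mat (n1 + n2) (n1 + n2)"
    by simp
  show "ctrans (four_block_mat U1 (0\<^sub>m n1 n2) (0\<^sub>m n2 n1) U2) * four_block_mat U1 (0\<^sub>m n1 n2) (0\<^sub>m n2 n1) U2
      = 1\<^sub>m (n1 + n2)"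
    using c unitary_matD(2)[OF U1] unitary_matD(2)[OF U2]
    by (simp add: ctrans_four_block_diag mult_four_block_diag)
qed

lemma diagonal_four_block_diag:
  assumes "diagonal_mat A" "diagonal_mat D" "A \<in> carrier_mat n1 n1" "D \<in> carrier_mat n2 n2"
  shows "diagonal_mat (four_block_mat A (0\<^sub>m n1 n2) (0\<^sub>m n2 n1) D)"
  using assms unfolding diagonal_mat_def by auto

lemma col_unitary_conj_eigenvector:
  assumes A: "A \<in> carrier_mat n n" and W: "unitary_mat n W" and n: "0 < n"
    and ev: "A *\<^sub>v col W 0 = e \<cdot>\<^sub>v col W 0"
  shows "col (ctrans W * A * W) 0 = e \<cdot>\<^sub>v unit_vec n 0"
proof -
  have Wc: "W \<in> carrier_mat n n" using unitary_matD(1)[OF W] .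
  have w0: "col W 0 \<in> carrier_vec n" using col_carrier_vec[OF n Wc] .
  have "col (ctrans W * A * W) 0 = (ctrans W * A) *\<^sub>v col W 0"
    using A Wc n by (intro col_mult2[of _ n n]) auto
  also have "\<dots> = ctrans W *\<^sub>v (A *\<^sub>v col W 0)"
    using A Wc w0 by (intro assoc_mult_mat_vec[of _ n n]) auto
  also have "\<dots> = e \<cdot>\<^sub>v (ctrans W *\<^sub>v col W 0)"
    unfolding ev using Wc w0 by (intro mult_mat_vec) auto
  also have "\<dots> = e \<cdot>\<^sub>v col (ctrans W * W) 0"
    using Wc n by (subst col_mult2) auto
  finally show ?thesis
    unfolding unitary_matD(2)[OF W] using n by simp
qed

lemma hermitian_split_first_column:
  assumes A: "hermitian_mat (Suc m) A" and col0: "col A 0 = e \<cdot>\<^sub>v unit_vec (Suc m) 0"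
  obtains A1 where "hermitian_mat m A1"
    "A = four_block_mat (e \<cdot>\<^sub>m 1\<^sub>m 1) (0\<^sub>m 1 m) (0\<^sub>m m 1) A1"
proof -
  let ?n = "Suc m"
  have Ac: "A \<in> carrier_mat ?n ?n" and hA: "ctrans A = A" using hermitian_matD[OF A] by auto
  have c0: "A $$ (i, 0) = (if i = 0 then e else 0)" if "i < ?n" for i
    using arg_cong[OF col0, of "\<lambda>c. c $ i"] Ac that by simp
  have r0: "A $$ (0, j) = (if j = 0 then e else 0)" if "j < ?n" for j
  proof -
    have "A $$ (0, j) = cnj (A $$ (j, 0))"
      using arg_cong[OF hA, of "\<lambda>M. M $$ (0, j)"] Ac that by simp
    moreover have "cnj e = e"
      using arg_cong[OF hA, of "\<lambda>M. M $$ (0, 0)"] Ac c0[of 0] by simp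
    ultimately show ?thesis using c0[OF that] by simp
  qed
  define A1 where "A1 = mat m m (\<lambda>(i, j). A $$ (Suc i, Suc j))"
  have "hermitian_mat m A1"
    unfolding hermitian_mat_def
  proof
    show "A1 \<in> carrier_mat m m" unfolding A1_def by simp
    show "ctrans A1 = A1"
    proof (rule eq_matI)
      fix i j assume "i < dim_row A1" "j < dim_col A1"
      then have "i < m" "j < m" unfolding A1_def by auto
      then show "ctrans A1 $$ (i, j) = A1 $$ (i, j)"
        using arg_cong[OF hA, of "\<lambda>M. M $$ (Suc i, Suc j)"] Ac by (simp add: A1_def)
    qed (simp_all add: A1_def)
  qed
  moreover have "A = four_block_mat (e \<cdot>\<^sub>m 1\<^sub>m 1) (0\<^sub>m 1 m) (0\<^sub>m m 1) A1"
  proof (rule eq_matI)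
    fix i j assume "i < dim_row (four_block_mat (e \<cdot>\<^sub>m 1\<^sub>m 1) (0\<^sub>m 1 m) (0\<^sub>m m 1) A1)"
      "j < dim_col (four_block_mat (e \<cdot>\<^sub>m 1\<^sub>m 1) (0\<^sub>m 1 m) (0\<^sub>m m 1) A1)"
    then have i: "i < ?n" and j: "j < ?n" by (simp_all add: A1_def)
    show "A $$ (i, j) = four_block_mat (e \<cdot>\<^sub>m 1\<^sub>m 1) (0\<^sub>m 1 m) (0\<^sub>m m 1) A1 $$ (i, j)"
    proof (cases "i = 0 \<or> j = 0")
      case True
      then show ?thesis using c0[OF i] r0[OF j] i j by (auto simp: A1_def)
    next
      case False
      then obtain i' j' where "i = Suc i'" "j = Suc j'" by (metis not0_implies_Suc)
      then show ?thesis using i j by (simp add: A1_def)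
    qed
  qed (use Ac in \<open>simp_all add: A1_def\<close>)
  ultimately show ?thesis using that by blast
qed

lemma unitary_conj_diagonalization:
  assumes W: "unitary_mat n W" and A: "A \<in> carrier_mat n n"
    and V: "unitary_mat n V" and D: "D \<in> carrier_mat n n"
    and eq: "ctrans W * A * W = V * D * ctrans V"
  shows "A = (W * V) * D * ctrans (W * V)"
proof -
  have Wc: "W \<in> carrier_mat n n" and Vc: "V \<in> carrier_mat n n"
    using unitary_matD(1) W V by auto
  have "(W * V) * D * ctrans (W * V) = W * (V * D * ctrans V) * ctrans W"
    using Wc Vc D by (simp add: ctrans_mult[OF Wc Vc] assoc_mult_mat[of _ n n _ n _ n])
  also have "\<dots> = (W * ctrans W) * A * (W * ctrans W)"
    unfolding eq[symmetric] using A Wc by (simp add: assoc_mult_mat[of _ n n _ n _ n])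
  also have "\<dots> = A"
    using A unfolding unitary_matD(3)[OF W] by simp
  finally show ?thesis ..
qed

theorem hermitian_spectral_decomposition:
  assumes "hermitian_mat n A"
  shows "\<exists>U D. unitary_mat n U \<and> D \<in> carrier_mat n n \<and> diagonal_mat D \<and> A = U * D * ctrans U"
  using assms
proof (induction n arbitrary: A)
  case 0
  then have "A \<in> carrier_mat 0 0" by (rule hermitian_matD)
  moreover have "unitary_mat 0 (1\<^sub>m 0)" by (simp add: unitary_mat_def)
  ultimately show ?case unfolding diagonal_mat_def by force
next
  case (Suc m A)
  let ?n = "Suc m"
  have Ac: "A \<in> carrier_mat ?n ?n" using hermitian_matD(1)[OF Suc.prems] .
  obtain e v where v: "v \<in> carrier_vec ?n" "v \<noteq> 0\<^sub>v ?n" and ev: "A *\<^sub>v v = e \<cdot>\<^sub>v v"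
    using eigenvector_exists[OF Ac] by blast
  obtain W c where W: "unitary_mat ?n W" and Wv: "col W 0 = c \<cdot>\<^sub>v v"
    using unitary_with_first_column[OF v] by blast
  have Wc: "W \<in> carrier_mat ?n ?n" using unitary_matD(1)[OF W] .
  have "A *\<^sub>v col W 0 = e \<cdot>\<^sub>v col W 0"
    unfolding Wv using mult_mat_vec[OF Ac v(1)] ev by (simp add: smult_smult_assoc mult.commute)
  then have "col (ctrans W * A * W) 0 = e \<cdot>\<^sub>v unit_vec ?n 0"
    using col_unitary_conj_eigenvector[OF Ac W] by simp
  then obtain A1 where hA1: "hermitian_mat m A1"
    and blocks: "ctrans W * A * W = four_block_mat (e \<cdot>\<^sub>m 1\<^sub>m 1) (0\<^sub>m 1 m) (0\<^sub>m m 1) A1"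
    using hermitian_split_first_column[OF hermitian_congruence[OF Suc.prems Wc]] by blast
  obtain U1 D1 where U1: "unitary_mat m U1" and D1: "D1 \<in> carrier_mat m m" "diagonal_mat D1"
    and A1: "A1 = U1 * D1 * ctrans U1"
    using Suc.IH[OF hA1] by blast
  have U1c: "U1 \<in> carrier_mat m m" using unitary_matD(1)[OF U1] .
  define F where "F = four_block_mat (1\<^sub>m 1) (0\<^sub>m 1 m) (0\<^sub>m m 1) U1"
  define D where "D = four_block_mat (e \<cdot>\<^sub>m 1\<^sub>m 1) (0\<^sub>m 1 m) (0\<^sub>m m 1) D1"
  have F: "unitary_mat ?n F"
    using unitary_four_block_diag[OF _ U1, of 1 "1\<^sub>m 1"] unfolding F_def by (simp add: unitary_mat_def)
  have Fc: "F \<in> carrier_mat ?n ?n" using unitary_matD(1)[OF F] .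
  have Dc: "D \<in> carrier_mat ?n ?n"
    using four_block_carrier_mat[of "e \<cdot>\<^sub>m 1\<^sub>m 1" 1 1 D1 m m] D1 unfolding D_def by simp
  have diag: "diagonal_mat D"
    unfolding D_def using D1 by (intro diagonal_four_block_diag) (auto simp: diagonal_mat_def)
  have "ctrans W * A * W = F * D * ctrans F"
    unfolding blocks A1 F_def D_def using U1c D1 by (intro four_block_diag_conj[symmetric]) auto
  then have "A = (W * F) * D * ctrans (W * F)"
    using unitary_conj_diagonalization[OF W Ac F Dc] by simp
  then show ?case using unitary_mult[OF W F] Dc diag by blast
qed

lemma diagonal_mult_vec_index:
  assumes "diagonal_mat D" "D \<in> carrier_mat n n" "y \<in> carrier_vec n" "i < n"
  shows "(D *\<^sub>v y) $ i = D $$ (i, i) * y $ i"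
proof -
  have "(D *\<^sub>v y) $ i = (\<Sum>k<n. D $$ (i, k) * y $ k)"
    using assms by (simp add: scalar_prod_def lessThan_atLeast0)
  also have "\<dots> = (\<Sum>k<n. if k = i then D $$ (i, i) * y $ i else 0)"
    using assms unfolding diagonal_mat_def by (intro sum.cong) auto
  also have "\<dots> = D $$ (i, i) * y $ i" using assms(4) by simp
  finally show ?thesis .
qed

lemma psd_diagonal_mult_vec_eq_0:
  assumes D: "psd_mat n D" "diagonal_mat D" and y: "y \<in> carrier_vec n" and q: "quad_form D y = 0"
  shows "D *\<^sub>v y = 0\<^sub>v n"
proof -
  have Dc: "D \<in> carrier_mat n n" using psd_matD(2)[OF D(1)] .
  define t where "t i = D $$ (i, i) * (y $ i * cnj (y $ i))" for i
  have t_nonneg: "0 \<le> t i" if "i < n" for i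
  proof -
    have "0 \<le> D $$ (i, i)"
      using psd_matD(4)[OF D(1), of "unit_vec n i"] quad_form_unit_vec[OF Dc that] by simp
    then show ?thesis
      unfolding t_def using conjugate_square_positive[of "y $ i"] by (simp add: mult_nonneg_nonneg)
  qed
  have "quad_form D y = (\<Sum>i<n. cnj (y $ i) * (D *\<^sub>v y) $ i)"
    unfolding quad_form_def using Dc y by (simp add: scalar_prod_def lessThan_atLeast0)
  also have "\<dots> = (\<Sum>i<n. t i)"
    unfolding t_def by (intro sum.cong) (simp_all add: diagonal_mult_vec_index[OF D(2) Dc y] mult_ac)
  finally have "quad_form D y = (\<Sum>i<n. t i)" .
  then have "\<forall>i\<in>{..<n}. t i = 0"
    using q t_nonneg sum_nonneg_eq_0_iff[of "{..<n}" t] by simp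
  then have Dy: "D $$ (i, i) * y $ i = 0" if "i < n" for i
    using that unfolding t_def by auto
  show ?thesis
  proof (rule eq_vecI)
    fix i assume "i < dim_vec (0\<^sub>v n :: complex vec)"
    then have i: "i < n" by simp
    show "(D *\<^sub>v y) $ i = 0\<^sub>v n $ i"
      unfolding diagonal_mult_vec_index[OF D(2) Dc y i] using Dy[OF i] i by simp
  qed (use Dc in simp)
qed

lemma psd_mult_vec_eq_0:
  assumes X: "psd_mat n X" and w: "w \<in> carrier_vec n" and q: "quad_form X w = 0"
  shows "X *\<^sub>v w = 0\<^sub>v n"
proof -
  obtain U D where U: "unitary_mat n U" and D: "D \<in> carrier_mat n n" "diagonal_mat D"
    and XUD: "X = U * D * ctrans U"
    using hermitian_spectral_decomposition[OF psd_matD(1)[OF X]] by blast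
  have Uc: "U \<in> carrier_mat n n" using unitary_matD(1)[OF U] .
  have cUc: "ctrans U \<in> carrier_mat n n" using Uc by simp
  have "psd_mat n D"
    using psd_congruence[OF X Uc] unfolding XUD unitary_conj_cancel[OF U D(1)] .
  moreover have "quad_form D (ctrans U *\<^sub>v w) = 0"
    using q quad_form_congruence[OF cUc D(1) w] unfolding XUD by simp
  ultimately have "D *\<^sub>v (ctrans U *\<^sub>v w) = 0\<^sub>v n"
    using psd_diagonal_mult_vec_eq_0 D(2) cUc w by simp
  moreover have "X *\<^sub>v w = U *\<^sub>v (D *\<^sub>v (ctrans U *\<^sub>v w))"
    unfolding XUD using Uc D(1) cUc w
    by (simp add: assoc_mult_mat_vec[of _ n n _ n] assoc_mult_mat_vec[of U n n D n])
  moreover have "U *\<^sub>v 0\<^sub>v n = 0\<^sub>v n"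
    using Uc by (intro eq_vecI) (auto simp: scalar_prod_def)
  ultimately show ?thesis by simp
qed

section \<open>Group inverses and the support inverse\<close>

definition is_group_inverse :: "nat \<Rightarrow> 'a :: semiring_1 mat \<Rightarrow> 'a mat \<Rightarrow> bool" where
  "is_group_inverse n X Y \<longleftrightarrow> Y \<in> carrier_mat n n \<and> X * Y = Y * X \<and> X * Y * X = X \<and> Y * X * Y = Y"

lemma is_group_inverseD:
  assumes "is_group_inverse n X Y"
  shows "Y \<in> carrier_mat n n" "X * Y = Y * X" "X * Y * X = X" "Y * X * Y = Y"
  using assms unfolding is_group_inverse_def by blast+

lemma is_group_inverse_sym:
  "X \<in> carrier_mat n n \<Longrightarrow> is_group_inverse n X Y \<Longrightarrow> is_group_inverse n Y X"
  by (auto simp: is_group_inverse_def)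

lemma group_inverse_unique:
  fixes X :: "'a :: semiring_1 mat"
  assumes X: "X \<in> carrier_mat n n"
    and Y: "is_group_inverse n X Y" and Z: "is_group_inverse n X Z"
  shows "Y = Z"
proof -
  note Yc = is_group_inverseD(1)[OF Y] and c1 = is_group_inverseD(2)[OF Y]
    and r1 = is_group_inverseD(3)[OF Y] and s1 = is_group_inverseD(4)[OF Y]
  note Zc = is_group_inverseD(1)[OF Z] and c2 = is_group_inverseD(2)[OF Z]
    and r2 = is_group_inverseD(3)[OF Z] and s2 = is_group_inverseD(4)[OF Z]
  note assoc = assoc_mult_mat[of _ n n _ n _ n]
  have "(X * Y) * (X * Z) = (Y * X) * (Z * X)" by (simp only: c1 c2)
  also have "\<dots> = Y * (X * Z * X)" using X Yc Zc by (simp add: assoc)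
  finally have XYXZ: "(X * Y) * (X * Z) = X * Y" using r2 c1 by simp
  have "(X * Y) * (X * Z) = (X * Y * X) * Z" using X Yc Zc by (simp add: assoc)
  then have XY: "X * Y = X * Z" using XYXZ r1 by simp
  have "Y = Y * (X * Y)" using X Yc s1 by (simp add: assoc)
  also have "\<dots> = (Y * X) * Z" using assoc[OF Yc X Zc] XY by simp
  also have "\<dots> = (X * Y) * Z" by (simp only: c1)
  also have "\<dots> = Z * X * Z" by (simp only: XY c2)
  also have "\<dots> = Z" by (rule s2)
  finally show ?thesis .
qed

lemma is_group_inverse_unitary_conj:
  assumes U: "unitary_mat n U" and D: "D \<in> carrier_mat n n" and E: "is_group_inverse n D E"
  shows "is_group_inverse n (U * D * ctrans U) (U * E * ctrans U)"
proof -
  have Uc: "U \<in> carrier_mat n n" using unitary_matD(1)[OF U] .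
  note Ec = is_group_inverseD(1)[OF E] and DE = is_group_inverseD(2)[OF E]
    and DED = is_group_inverseD(3)[OF E] and EDE = is_group_inverseD(4)[OF E]
  let ?C = "\<lambda>M. U * M * ctrans U"
  have CDE: "?C D * ?C E = ?C (D * E)" and CED: "?C E * ?C D = ?C (E * D)"
    using unitary_conj_mult[OF U] D Ec by simp_all
  have "?C D * ?C E = ?C E * ?C D" unfolding CDE CED DE ..
  moreover have "?C D * ?C E * ?C D = ?C D"
    unfolding CDE using unitary_conj_mult[OF U] D Ec DED by simp
  moreover have "?C E * ?C D * ?C E = ?C E"
    unfolding CED using unitary_conj_mult[OF U] D Ec EDE by simp
  moreover have "?C E \<in> carrier_mat n n" using Uc Ec by simp
  ultimately show ?thesis unfolding is_group_inverse_def by blast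
qed

lemma diagonal_mult_index:
  assumes "diagonal_mat D" "D \<in> carrier_mat n n" "B \<in> carrier_mat n m" "i < n" "j < m"
  shows "(D * B) $$ (i, j) = D $$ (i, i) * B $$ (i, j)"
proof -
  have "(D * B) $$ (i, j) = (\<Sum>k<n. D $$ (i, k) * B $$ (k, j))"
    using assms by (simp add: scalar_prod_def lessThan_atLeast0)
  also have "\<dots> = (\<Sum>k<n. if k = i then D $$ (i, i) * B $$ (i, j) else 0)"
    using assms unfolding diagonal_mat_def by (intro sum.cong) auto
  also have "\<dots> = D $$ (i, i) * B $$ (i, j)" using assms(4) by simp
  finally show ?thesis .
qed

lemma diagonal_diag_supp_inv: "diagonal_mat (diag_supp_inv D)"
  by (simp add: diagonal_mat_def diag_supp_inv_def)

lemma dim_row_diag_supp_inv[simp]: "dim_row (diag_supp_inv D) = dim_row D"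
  and dim_col_diag_supp_inv[simp]: "dim_col (diag_supp_inv D) = dim_col D"
  by (simp_all add: diag_supp_inv_def)

lemma diag_supp_inv_carrier[simp]: "D \<in> carrier_mat n n \<Longrightarrow> diag_supp_inv D \<in> carrier_mat n n"
  by (simp add: diag_supp_inv_def)

lemma index_diag_supp_inv:
  "i < dim_row D \<Longrightarrow> j < dim_col D \<Longrightarrow>
    diag_supp_inv D $$ (i, j) = (if i = j \<and> D $$ (i, i) \<noteq> 0 then inverse (D $$ (i, i)) else 0)"
  by (simp add: diag_supp_inv_def)

lemma index_mult_diag_supp_inv:
  assumes D: "diagonal_mat D" "D \<in> carrier_mat n n" and ij: "i < n" "j < n"
  shows "(D * diag_supp_inv D) $$ (i, j) = (if i = j \<and> D $$ (i, i) \<noteq> 0 then 1 else 0)"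
    and "(diag_supp_inv D * D) $$ (i, j) = (if i = j \<and> D $$ (i, i) \<noteq> 0 then 1 else 0)"
proof -
  have E: "diagonal_mat (diag_supp_inv D)" "diag_supp_inv D \<in> carrier_mat n n"
    using D by (simp_all add: diagonal_diag_supp_inv)
  have "D $$ (i, j) = 0" if "i \<noteq> j" using D ij that by (simp add: diagonal_mat_def)
  then show "(D * diag_supp_inv D) $$ (i, j) = (if i = j \<and> D $$ (i, i) \<noteq> 0 then 1 else 0)"
    and "(diag_supp_inv D * D) $$ (i, j) = (if i = j \<and> D $$ (i, i) \<noteq> 0 then 1 else 0)"
    using ij D diagonal_mult_index[OF D E(2) ij] diagonal_mult_index[OF E D(2) ij]
    by (auto simp: index_diag_supp_inv)
qed

lemma is_group_inverse_diag_supp_inv: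
  assumes D: "diagonal_mat D" "D \<in> carrier_mat n n"
  shows "is_group_inverse n D (diag_supp_inv D)"
proof -
  let ?E = "diag_supp_inv D"
  have E: "diagonal_mat ?E" "?E \<in> carrier_mat n n" using D by (simp_all add: diagonal_diag_supp_inv)
  have E_index: "?E $$ (i, j) = (if i = j \<and> D $$ (i, i) \<noteq> 0 then inverse (D $$ (i, i)) else 0)"
    if "i < n" "j < n" for i j
    using D that by (simp add: index_diag_supp_inv)
  have D0: "D $$ (i, j) = 0" if "i < n" "j < n" "i \<noteq> j" for i j
    using D that by (simp add: diagonal_mat_def)
  note DE = index_mult_diag_supp_inv(1)[OF D] and ED = index_mult_diag_supp_inv(2)[OF D]
  have "D * ?E = ?E * D"
  proof (rule eq_matI)
    fix i j assume "i < dim_row (?E * D)" "j < dim_col (?E * D)"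
    then have "i < n" "j < n" using D E by auto
    then show "(D * ?E) $$ (i, j) = (?E * D) $$ (i, j)" by (simp only: DE ED)
  qed (use D E in auto)
  moreover have "D * ?E * D = D"
  proof (rule eq_matI)
    fix i j assume "i < dim_row D" "j < dim_col D"
    then have i: "i < n" and j: "j < n" using D by auto
    have "(D * ?E * D) $$ (i, j) = (D * (?E * D)) $$ (i, j)"
      by (simp only: assoc_mult_mat[OF D(2) E(2) D(2)])
    also have "\<dots> = D $$ (i, i) * (?E * D) $$ (i, j)"
      by (rule diagonal_mult_index[OF D mult_carrier_mat[OF E(2) D(2)] i j])
    finally show "(D * ?E * D) $$ (i, j) = D $$ (i, j)"
      using ED[OF i j] D0[OF i j] by (cases "i = j") auto
  qed (use D E in auto)
  moreover have "?E * D * ?E = ?E"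
  proof (rule eq_matI)
    fix i j assume "i < dim_row ?E" "j < dim_col ?E"
    then have i: "i < n" and j: "j < n" using E by auto
    have "(?E * D * ?E) $$ (i, j) = (?E * (D * ?E)) $$ (i, j)"
      by (simp only: assoc_mult_mat[OF E(2) D(2) E(2)])
    also have "\<dots> = ?E $$ (i, i) * (D * ?E) $$ (i, j)"
      by (rule diagonal_mult_index[OF E mult_carrier_mat[OF D(2) E(2)] i j])
    finally show "(?E * D * ?E) $$ (i, j) = ?E $$ (i, j)"
      using DE[OF i j] E_index[OF i j] E_index[OF i i] by (cases "i = j") auto
  qed (use D E in auto)
  ultimately show ?thesis using E(2) by (simp add: is_group_inverse_def)
qed

(* The description in supp_inv_def determines a unique matrix because every candidate is a
   group inverse of X. *)
lemma supp_inv_unitary_diag: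
  assumes U: "unitary_mat n U" and D: "D \<in> carrier_mat n n" "diagonal_mat D"
  shows "supp_inv n (U * D * ctrans U) = U * diag_supp_inv D * ctrans U"
  unfolding supp_inv_def
proof (rule the_equality)
  show "\<exists>U' D'. unitary_mat n U' \<and> D' \<in> carrier_mat n n \<and> diagonal_mat D' \<and>
      U * D * ctrans U = U' * D' * ctrans U' \<and> U * diag_supp_inv D * ctrans U = U' * diag_supp_inv D' * ctrans U'"
    using U D by blast
  have Uc: "U \<in> carrier_mat n n" using unitary_matD(1)[OF U] .
  fix Y assume "\<exists>U' D'. unitary_mat n U' \<and> D' \<in> carrier_mat n n \<and> diagonal_mat D' \<and>
      U * D * ctrans U = U' * D' * ctrans U' \<and> Y = U' * diag_supp_inv D' * ctrans U'"
  then obtain U' D' where U': "unitary_mat n U'" and D': "D' \<in> carrier_mat n n" "diagonal_mat D'"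
    and X: "U * D * ctrans U = U' * D' * ctrans U'" and Y: "Y = U' * diag_supp_inv D' * ctrans U'"
    by blast
  have "is_group_inverse n (U * D * ctrans U) Y"
    unfolding X Y using is_group_inverse_unitary_conj[OF U' D'(1) is_group_inverse_diag_supp_inv[OF D'(2,1)]] .
  moreover have "is_group_inverse n (U * D * ctrans U) (U * diag_supp_inv D * ctrans U)"
    using is_group_inverse_unitary_conj[OF U D(1) is_group_inverse_diag_supp_inv[OF D(2,1)]] .
  ultimately show "Y = U * diag_supp_inv D * ctrans U"
    using Uc D(1) by (intro group_inverse_unique) auto
qed

lemma hermitian_diag_supp_inv:
  assumes "hermitian_mat n D"
  shows "hermitian_mat n (diag_supp_inv D)"
proof -
  have D: "D \<in> carrier_mat n n" "ctrans D = D" using hermitian_matD[OF assms] by auto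
  have "cnj (D $$ (i, i)) = D $$ (i, i)" if "i < n" for i
    using arg_cong[OF D(2), of "\<lambda>M. M $$ (i, i)"] D(1) that by simp
  then have "ctrans (diag_supp_inv D) = diag_supp_inv D"
    using D(1) by (intro eq_matI) (auto simp: diag_supp_inv_def)
  then show ?thesis using D(1) by (simp add: hermitian_mat_def)
qed

lemma hermitian_supp_inv:
  assumes X: "hermitian_mat n X"
  shows "hermitian_mat n (supp_inv n X)" and "is_group_inverse n X (supp_inv n X)"
proof -
  obtain U D where U: "unitary_mat n U" and D: "D \<in> carrier_mat n n" "diagonal_mat D"
    and XUD: "X = U * D * ctrans U"
    using hermitian_spectral_decomposition[OF X] by blast
  have Uc: "U \<in> carrier_mat n n" using unitary_matD(1)[OF U] .
  have "hermitian_mat n D"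
    using hermitian_congruence[OF X Uc] unfolding XUD unitary_conj_cancel[OF U D(1)] .
  then have "hermitian_mat n (ctrans (ctrans U) * diag_supp_inv D * ctrans U)"
    using Uc by (intro hermitian_congruence hermitian_diag_supp_inv) auto
  then show "hermitian_mat n (supp_inv n X)"
    unfolding XUD supp_inv_unitary_diag[OF U D] by simp
  show "is_group_inverse n X (supp_inv n X)"
    unfolding XUD supp_inv_unitary_diag[OF U D]
    using is_group_inverse_unitary_conj[OF U D(1) is_group_inverse_diag_supp_inv[OF D(2,1)]] .
qed

lemma supp_inv_supp_inv:
  assumes X: "hermitian_mat n X"
  shows "supp_inv n (supp_inv n X) = X"
proof -
  have Xp: "hermitian_mat n (supp_inv n X)" and G: "is_group_inverse n X (supp_inv n X)"
    using hermitian_supp_inv[OF X] by auto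
  show ?thesis
    using hermitian_matD(1)[OF Xp] hermitian_supp_inv(2)[OF Xp]
      is_group_inverse_sym[OF hermitian_matD(1)[OF X] G]
    by (rule group_inverse_unique)
qed

lemma psd_supp_inv:
  assumes X: "psd_mat n X"
  shows "psd_mat n (supp_inv n X)"
proof -
  have hX: "hermitian_mat n X" using psd_matD(1)[OF X] .
  have Xp: "supp_inv n X \<in> carrier_mat n n" "ctrans (supp_inv n X) = supp_inv n X"
    using hermitian_matD[OF hermitian_supp_inv(1)[OF hX]] by auto
  have "supp_inv n X * X * supp_inv n X = supp_inv n X"
    using is_group_inverseD(4)[OF hermitian_supp_inv(2)[OF hX]] .
  then show ?thesis using psd_congruence[OF X Xp(1)] unfolding Xp(2) by simp
qed

lemma hermitian_supp_proj:
  assumes X: "hermitian_mat n X"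
  shows "hermitian_mat n (X * supp_inv n X)"
proof -
  have Xc: "X \<in> carrier_mat n n" and hX: "ctrans X = X" using hermitian_matD[OF X] by auto
  have Xpc: "supp_inv n X \<in> carrier_mat n n" and hXp: "ctrans (supp_inv n X) = supp_inv n X"
    using hermitian_matD[OF hermitian_supp_inv(1)[OF X]] by auto
  have "ctrans (X * supp_inv n X) = X * supp_inv n X"
    using ctrans_mult[OF Xc Xpc] hX hXp is_group_inverseD(2)[OF hermitian_supp_inv(2)[OF X]] by simp
  then show ?thesis using Xc Xpc by (simp add: hermitian_mat_def)
qed

section \<open>Column spaces and rank\<close>

lemma mult_mat_vec_unit_vec:
  fixes A :: "'a :: semiring_1 mat"
  assumes "A \<in> carrier_mat nr nc" "j < nc"
  shows "A *\<^sub>v unit_vec nc j = col A j"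
  using assms by (intro eq_vecI) auto

lemma mult_mat_vec_minus_eq_0_iff:
  fixes A :: "'a :: ring mat"
  assumes "A \<in> carrier_mat nr nc" "v \<in> carrier_vec nc" "w \<in> carrier_vec nc"
  shows "A *\<^sub>v (v - w) = 0\<^sub>v nr \<longleftrightarrow> A *\<^sub>v v = A *\<^sub>v w"
  using assms by (auto simp: mult_minus_distrib_mat_vec vec_eq_iff)

lemma mat_eq_by_mult_vec:
  fixes A :: "'a :: semiring_1 mat"
  assumes A: "A \<in> carrier_mat nr nc" and B: "B \<in> carrier_mat nr nc"
    and eq: "\<And>v. v \<in> carrier_vec nc \<Longrightarrow> A *\<^sub>v v = B *\<^sub>v v"
  shows "A = B"
proof (rule mat_col_eqI)
  fix j assume "j < dim_col B"
  then have j: "j < nc" using B by simp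
  show "col A j = col B j"
    using eq[OF unit_vec_carrier] mult_mat_vec_unit_vec[OF A j] mult_mat_vec_unit_vec[OF B j] by simp
qed (use A B in auto)

lemma (in vectorspace) subspace_eq_of_dim_eq:
  assumes W1: "VectorSpace.subspace K W1 V" and W2: "VectorSpace.subspace K W2 V" and sub: "W1 \<subseteq> W2"
    and f1: "vectorspace.fin_dim K (vs W1)" and f2: "vectorspace.fin_dim K (vs W2)"
    and d: "vectorspace.dim K (vs W1) = vectorspace.dim K (vs W2)"
  shows "W1 = W2"
proof -
  interpret v1: vectorspace K "vs W1" using subspace_is_vs[OF W1] .
  interpret v2: vectorspace K "vs W2" using subspace_is_vs[OF W2] .
  have sm1: "submodule K W1 V" and sm2: "submodule K W2 V" using W1 W2 by simp_all
  obtain b where fb: "finite b" and bb: "v1.basis b" using v1.finite_basis_exists[OF f1] by blast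
  have bW1: "b \<subseteq> W1" using bb unfolding v1.basis_def by simp
  have bW2: "b \<subseteq> W2" using bW1 sub by blast
  have "\<not> lin_dep b"
    using bb span_li_not_depend(2)[OF bW1 sm1] unfolding v1.basis_def by simp
  then have "\<not> LinearCombinations.module.lin_dep K (vs W2) b"
    using span_li_not_depend(2)[OF bW2 sm2] by simp
  then have "v2.basis b"
    using v2.dim_li_is_basis[OF f2 fb] bW2 v1.dim_basis[OF fb bb] d by simp
  then have "span b = W2"
    using span_li_not_depend(1)[OF bW2 sm2] unfolding v2.basis_def by simp
  then show ?thesis using span_is_subset[OF bW1 sm1] sub by simp
qed

context vec_space
begin

lemma col_space_mult_subset:
  assumes "A \<in> carrier_mat n k" "B \<in> carrier_mat k m"
  shows "col_space (A * B) \<subseteq> col_space A"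
  using assms col_space_eq[OF assms(1)] col_space_eq[OF mult_carrier_mat[OF assms]]
  by (auto simp: assoc_mult_mat_vec)

lemma col_space_eq_of_rank_eq:
  assumes A: "A \<in> carrier_mat n ka" and B: "B \<in> carrier_mat n kb"
    and sub: "col_space A \<subseteq> col_space B" and r: "rank A = rank B"
  shows "col_space A = col_space B"
proof (rule subspace_eq_of_dim_eq)
  show "VectorSpace.subspace class_ring (col_space A) V" "VectorSpace.subspace class_ring (col_space B) V"
    unfolding col_space_def using A B cols_dim[of A] cols_dim[of B]
    by (auto intro!: span_is_subspace)
  show "vectorspace.fin_dim class_ring (vs (col_space A))"
    "vectorspace.fin_dim class_ring (vs (col_space B))"
    unfolding col_space_def using fin_dim_span_cols[OF A] fin_dim_span_cols[OF B] .
  show "vectorspace.dim class_ring (vs (col_space A)) = vectorspace.dim class_ring (vs (col_space B))"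
    using r unfolding rank_def col_space_def .
qed (rule sub)

lemma rank_eq_of_col_space_eq: "col_space A = col_space B \<Longrightarrow> rank A = rank B"
  unfolding rank_def col_space_def by simp

lemma mult_eq_of_col_space_subset:
  assumes P: "P \<in> carrier_mat n n" and X: "X \<in> carrier_mat n k" and Y: "Y \<in> carrier_mat n m"
    and PX: "P * X = X" and sub: "col_space Y \<subseteq> col_space X"
  shows "P * Y = Y"
proof (rule mat_col_eqI)
  fix j assume "j < dim_col Y"
  then have j: "j < m" using Y by simp
  have "col Y j \<in> col_space Y"
    using mult_mat_vec_unit_vec[OF Y j] Y col_space_eq[OF Y] unit_vec_carrier[of m j] by auto
  then obtain x where x: "x \<in> carrier_vec k" and Yj: "col Y j = X *\<^sub>v x"
    using sub col_space_eq[OF X] X by auto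
  have "col (P * Y) j = P *\<^sub>v (X *\<^sub>v x)" unfolding col_mult2[OF P Y j] Yj ..
  also have "\<dots> = X *\<^sub>v x" using assoc_mult_mat_vec[OF P X x] PX by simp
  finally show "col (P * Y) j = col Y j" using Yj by simp
qed (use P Y in auto)

end

lemma col_space_supp_inv:
  assumes X: "hermitian_mat n X"
  shows "vec_space.col_space n (supp_inv n X) = vec_space.col_space n X"
proof -
  interpret vec_space "TYPE(complex)" n .
  let ?Xp = "supp_inv n X"
  have Xc: "X \<in> carrier_mat n n" using hermitian_matD(1)[OF X] .
  have Xpc: "?Xp \<in> carrier_mat n n" and c: "X * ?Xp = ?Xp * X"
    and r: "X * ?Xp * X = X" and s: "?Xp * X * ?Xp = ?Xp"
    using is_group_inverseD[OF hermitian_supp_inv(2)[OF X]] by auto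
  have "?Xp = X * (?Xp * ?Xp)"
    using assoc_mult_mat[OF Xc Xpc Xpc] c s by simp
  moreover have "X = ?Xp * (X * X)"
    using assoc_mult_mat[OF Xpc Xc Xc] c r by simp
  ultimately show ?thesis
    using col_space_mult_subset[OF Xc, of "?Xp * ?Xp" n] col_space_mult_subset[OF Xpc, of "X * X" n]
      Xc Xpc by auto
qed

lemma mat_rank_supp_inv:
  assumes "hermitian_mat n X"
  shows "mat_rank n (supp_inv n X) = mat_rank n X"
  unfolding mat_rank_def by (rule vec_space.rank_eq_of_col_space_eq[OF col_space_supp_inv[OF assms]])

lemma supp_proj_eq_of_col_space_eq:
  assumes X: "hermitian_mat n X" and Y: "hermitian_mat n Y"
    and eq: "vec_space.col_space n X = vec_space.col_space n Y"
  shows "X * supp_inv n X = Y * supp_inv n Y"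
proof -
  interpret vec_space "TYPE(complex)" n .
  define P where "P = X * supp_inv n X"
  define Q where "Q = Y * supp_inv n Y"
  have Xc: "X \<in> carrier_mat n n" and Yc: "Y \<in> carrier_mat n n"
    using hermitian_matD(1) X Y by auto
  have Pc: "P \<in> carrier_mat n n" and hP: "ctrans P = P" and PX: "P * X = X"
    using hermitian_matD[OF hermitian_supp_proj[OF X]] is_group_inverseD(3)[OF hermitian_supp_inv(2)[OF X]]
    unfolding P_def by auto
  have Qc: "Q \<in> carrier_mat n n" and hQ: "ctrans Q = Q" and QY: "Q * Y = Y"
    using hermitian_matD[OF hermitian_supp_proj[OF Y]] is_group_inverseD(3)[OF hermitian_supp_inv(2)[OF Y]]
    unfolding Q_def by auto
  have Ypc: "supp_inv n Y \<in> carrier_mat n n"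
    using hermitian_matD(1)[OF hermitian_supp_inv(1)[OF Y]] .
  have "P * Y = Y" using mult_eq_of_col_space_subset[OF Pc Xc Yc PX] eq by simp
  then have PQ: "P * Q = Q" unfolding Q_def using assoc_mult_mat[OF Pc Yc Ypc] by simp
  have Xpc: "supp_inv n X \<in> carrier_mat n n"
    using hermitian_matD(1)[OF hermitian_supp_inv(1)[OF X]] .
  have "Q * X = X" using mult_eq_of_col_space_subset[OF Qc Yc Xc QY] eq by simp
  then have QP: "Q * P = P" unfolding P_def using assoc_mult_mat[OF Qc Xc Xpc] by simp
  have "P = ctrans (Q * P)" using QP hP by simp
  also have "\<dots> = Q" using ctrans_mult[OF Qc Pc] hP hQ PQ by simp
  finally show ?thesis unfolding P_def Q_def .
qed

section \<open>Support inverses reverse the Loewner order\<close>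

lemma loewner_mult_vec_eq_0:
  assumes X: "psd_mat n X" and XY: "psd_mat n (Y - complex_of_real k \<cdot>\<^sub>m X)" and k: "0 < k"
    and Y: "Y \<in> carrier_mat n n" and u: "u \<in> carrier_vec n" and Yu: "Y *\<^sub>v u = 0\<^sub>v n"
  shows "X *\<^sub>v u = 0\<^sub>v n"
proof -
  have Xc: "X \<in> carrier_mat n n" using psd_matD(2)[OF X] .
  let ?q = "quad_form X u"
  have "quad_form Y u = 0" using Yu u by (simp add: quad_form_def)
  then have "quad_form (Y - complex_of_real k \<cdot>\<^sub>m X) u = - (complex_of_real k * ?q)"
    using quad_form_minus[OF Y _ u, of "complex_of_real k \<cdot>\<^sub>m X"] quad_form_smult[OF Xc u] Xc by simp
  then have "complex_of_real k * ?q \<le> 0" using psd_matD(4)[OF XY u] by simp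
  moreover have "0 \<le> complex_of_real k * ?q"
    using psd_matD(4)[OF X u] k by (intro mult_nonneg_nonneg) (simp_all add: less_eq_complex_def)
  ultimately have "?q = 0" using k by simp
  then show ?thesis using psd_mult_vec_eq_0[OF X u] by simp
qed

lemma col_space_subset_of_loewner:
  assumes X: "psd_mat n X" and Y: "psd_mat n Y"
    and XY: "psd_mat n (Y - complex_of_real k \<cdot>\<^sub>m X)" and k: "0 < k"
  shows "vec_space.col_space n X \<subseteq> vec_space.col_space n Y"
proof -
  interpret vec_space "TYPE(complex)" n .
  let ?Yp = "supp_inv n Y"
  define Q where "Q = ?Yp * Y"
  have Xc: "X \<in> carrier_mat n n" and hX: "ctrans X = X" using psd_matD[OF X] by auto
  have Yc: "Y \<in> carrier_mat n n" and hY: "hermitian_mat n Y" using psd_matD[OF Y] by auto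
  have Ypc: "?Yp \<in> carrier_mat n n" and hYp: "ctrans ?Yp = ?Yp"
    using hermitian_matD[OF hermitian_supp_inv(1)[OF hY]] by auto
  have r: "Y * ?Yp * Y = Y"
    using is_group_inverseD[OF hermitian_supp_inv(2)[OF hY]] by auto
  have Qc: "Q \<in> carrier_mat n n" unfolding Q_def using Yc Ypc by simp
  (* Y annihilates v - Q v, hence so does X; thus X = X Q, and taking adjoints X = Y (Y^+ X). *)
  have "X * Q = X"
  proof (rule mat_eq_by_mult_vec[OF _ Xc])
    show "X * Q \<in> carrier_mat n n" using Xc Qc by simp
    fix v :: "complex vec" assume v: "v \<in> carrier_vec n"
    have Qv: "Q *\<^sub>v v \<in> carrier_vec n" using Qc v by simp
    have "Y *\<^sub>v (Q *\<^sub>v v) = Y *\<^sub>v v"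
      using assoc_mult_mat_vec[OF Yc Qc v] r unfolding Q_def
      by (simp add: assoc_mult_mat[OF Yc Ypc Yc, symmetric])
    then have "Y *\<^sub>v (v - Q *\<^sub>v v) = 0\<^sub>v n"
      using mult_mat_vec_minus_eq_0_iff[OF Yc v Qv] by simp
    then have "X *\<^sub>v (v - Q *\<^sub>v v) = 0\<^sub>v n"
      using loewner_mult_vec_eq_0[OF X XY k Yc] v Qv by simp
    then have "X *\<^sub>v v = X *\<^sub>v (Q *\<^sub>v v)"
      using mult_mat_vec_minus_eq_0_iff[OF Xc v Qv] by simp
    then show "(X * Q) *\<^sub>v v = X *\<^sub>v v" using assoc_mult_mat_vec[OF Xc Qc v] by simp
  qed
  then have "ctrans Q * X = X"
    using ctrans_mult[OF Xc Qc] hX by simp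
  then have "X = Y * (?Yp * X)"
    unfolding Q_def ctrans_mult[OF Ypc Yc] hYp psd_matD(3)[OF Y]
    using assoc_mult_mat[OF Yc Ypc Xc] by simp
  then show ?thesis using col_space_mult_subset[OF Yc, of "?Yp * X" n] Ypc Xc by simp
qed

lemma smult_minus_sandwich:
  fixes P Q X :: "'a :: comm_ring mat"
  assumes P: "P \<in> carrier_mat n n" and Q: "Q \<in> carrier_mat n n" and X: "X \<in> carrier_mat n n"
  shows "(a \<cdot>\<^sub>m P - Q) * X * (a \<cdot>\<^sub>m P - Q)
    = a \<cdot>\<^sub>m (a \<cdot>\<^sub>m (P * X * P) - P * X * Q) - (a \<cdot>\<^sub>m (Q * X * P) - Q * X * Q)"
proof -
  have aPQ: "a \<cdot>\<^sub>m P - Q \<in> carrier_mat n n" using Q by (rule minus_carrier_mat)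
  have "(a \<cdot>\<^sub>m P - Q) * X = a \<cdot>\<^sub>m (P * X) - Q * X"
    using minus_mult_distrib_mat[of "a \<cdot>\<^sub>m P" n n Q X n] mult_smult_assoc_mat[OF P X] P Q X by simp
  moreover have "(a \<cdot>\<^sub>m (P * X) - Q * X) * (a \<cdot>\<^sub>m P - Q)
      = a \<cdot>\<^sub>m (P * X) * (a \<cdot>\<^sub>m P - Q) - Q * X * (a \<cdot>\<^sub>m P - Q)"
    using minus_mult_distrib_mat[of "a \<cdot>\<^sub>m (P * X)" n n "Q * X" "a \<cdot>\<^sub>m P - Q" n] P Q X aPQ by simp
  moreover have "a \<cdot>\<^sub>m (P * X) * (a \<cdot>\<^sub>m P - Q) = a \<cdot>\<^sub>m (a \<cdot>\<^sub>m (P * X * P) - P * X * Q)"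
    using mult_smult_assoc_mat[of "P * X" n n _ n] mult_minus_distrib_mat[of "P * X" n n "a \<cdot>\<^sub>m P" n Q]
      mult_smult_distrib[of "P * X" n n P n] P Q X aPQ by simp
  moreover have "Q * X * (a \<cdot>\<^sub>m P - Q) = a \<cdot>\<^sub>m (Q * X * P) - Q * X * Q"
    using mult_minus_distrib_mat[of "Q * X" n n "a \<cdot>\<^sub>m P" n Q] mult_smult_distrib[of "Q * X" n n P n]
      P Q X by simp
  ultimately show ?thesis by simp
qed

lemma supp_inv_loewner_of_supp_proj_eq:
  assumes X: "psd_mat n X" and Y: "psd_mat n Y"
    and P: "X * supp_inv n X = Y * supp_inv n Y"
    and XY: "psd_mat n (Y - complex_of_real k \<cdot>\<^sub>m X)" and k: "0 \<le> k"
  shows "psd_mat n (supp_inv n X - complex_of_real k \<cdot>\<^sub>m supp_inv n Y)"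
proof -
  define c where "c = complex_of_real k"
  define Xp where "Xp = supp_inv n X"
  define Yp where "Yp = supp_inv n Y"
  have Xc: "X \<in> carrier_mat n n" and Yc: "Y \<in> carrier_mat n n"
    using psd_matD(2) X Y by auto
  have Xpc: "Xp \<in> carrier_mat n n" and hXp: "ctrans Xp = Xp"
    and Ypc: "Yp \<in> carrier_mat n n" and hYp: "ctrans Yp = Yp"
    using hermitian_matD[OF hermitian_supp_inv(1)[OF psd_matD(1)]] X Y
    unfolding Xp_def Yp_def by auto
  note GX = is_group_inverseD[OF hermitian_supp_inv(2)[OF psd_matD(1)[OF X]], folded Xp_def]
  note GY = is_group_inverseD[OF hermitian_supp_inv(2)[OF psd_matD(1)[OF Y]], folded Yp_def]
  have P': "X * Xp = Y * Yp" using P unfolding Xp_def Yp_def .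
  have a1: "Yp * X * Xp = Yp"
    using assoc_mult_mat[OF Ypc Xc Xpc] P' assoc_mult_mat[OF Ypc Yc Ypc] GY(4) by simp
  have a2: "Xp * X * Yp = Yp"
    using GX(2) P' GY(2,4) by simp
  define C where "C = c \<cdot>\<^sub>m Yp - Xp"
  define W where "W = Yp * X * Yp"
  have Cc: "C \<in> carrier_mat n n" unfolding C_def using Xpc by (rule minus_carrier_mat)
  have Wc: "W \<in> carrier_mat n n" unfolding W_def using Ypc Xc by simp
  have hC: "ctrans C = C"
    unfolding C_def using ctrans_minus[of "c \<cdot>\<^sub>m Yp" n n Xp] Ypc Xpc hYp hXp
    by (simp add: ctrans_smult c_def)
  have CXC: "C * X * C = c \<cdot>\<^sub>m (c \<cdot>\<^sub>m W - Yp) - (c \<cdot>\<^sub>m Yp - Xp)"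
    unfolding C_def W_def smult_minus_sandwich[OF Ypc Xpc Xc] a1 a2 GX(4) ..
  have "Yp * (Y - c \<cdot>\<^sub>m X) * Yp = (Yp * Y - c \<cdot>\<^sub>m (Yp * X)) * Yp"
    using mult_minus_distrib_mat[of Yp n n Y n "c \<cdot>\<^sub>m X"] mult_smult_distrib[OF Ypc Xc] Ypc Yc Xc
    by simp
  also have "\<dots> = Yp - c \<cdot>\<^sub>m W"
    using minus_mult_distrib_mat[of "Yp * Y" n n "c \<cdot>\<^sub>m (Yp * X)" Yp n] GY(4)
      mult_smult_assoc_mat[of "Yp * X" n n Yp n] Ypc Yc Xc
    unfolding W_def by simp
  finally have YpYYp: "Yp * (Y - c \<cdot>\<^sub>m X) * Yp = Yp - c \<cdot>\<^sub>m W" .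
  have "Xp - c \<cdot>\<^sub>m Yp = C * X * C + c \<cdot>\<^sub>m (Yp * (Y - c \<cdot>\<^sub>m X) * Yp)"
    unfolding CXC YpYYp using Xpc Ypc Wc by (intro eq_matI) (auto simp: algebra_simps)
  moreover have "psd_mat n (C * X * C)" using psd_congruence[OF X Cc] hC by simp
  moreover have "psd_mat n (Yp * (Y - c \<cdot>\<^sub>m X) * Yp)"
    using psd_congruence[OF XY Ypc] hYp unfolding c_def by simp
  ultimately show ?thesis
    using psd_add psd_smult k unfolding Xp_def Yp_def c_def by metis
qed

lemma k_hyponym_zero:
  assumes "X \<in> carrier_mat n n" "Y \<in> carrier_mat n n"
  shows "k_hyponym n 0 X Y \<longleftrightarrow> psd_mat n Y"
proof -
  have "Y - complex_of_real 0 \<cdot>\<^sub>m X = Y" using assms by (intro eq_matI) auto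
  then show ?thesis unfolding k_hyponym_def by simp
qed

lemma k_hyponym_supp_inv_antitone:
  assumes X: "psd_mat n X" and Y: "psd_mat n Y" and rank: "mat_rank n X = mat_rank n Y"
    and k: "0 < k" and XY: "k_hyponym n k X Y"
  shows "k_hyponym n k (supp_inv n Y) (supp_inv n X)"
proof -
  have XY': "psd_mat n (Y - complex_of_real k \<cdot>\<^sub>m X)" using XY unfolding k_hyponym_def .
  have "vec_space.col_space n X = vec_space.col_space n Y"
    using vec_space.col_space_eq_of_rank_eq[OF psd_matD(2)[OF X] psd_matD(2)[OF Y]]
      col_space_subset_of_loewner[OF X Y XY' k] rank
    unfolding mat_rank_def by blast
  then have "X * supp_inv n X = Y * supp_inv n Y"
    using supp_proj_eq_of_col_space_eq psd_matD(1) X Y by blast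
  then show ?thesis
    unfolding k_hyponym_def using supp_inv_loewner_of_supp_proj_eq[OF X Y _ XY'] k by simp
qed

lemma k_hyponym_supp_inv_iff:
  assumes X: "psd_mat n X" and Y: "psd_mat n Y" and rank: "mat_rank n X = mat_rank n Y"
    and k: "0 < k"
  shows "k_hyponym n k X Y \<longleftrightarrow> k_hyponym n k (supp_inv n Y) (supp_inv n X)"
proof
  assume "k_hyponym n k X Y"
  then show "k_hyponym n k (supp_inv n Y) (supp_inv n X)"
    by (rule k_hyponym_supp_inv_antitone[OF X Y rank k])
next
  have "mat_rank n (supp_inv n Y) = mat_rank n (supp_inv n X)"
    using mat_rank_supp_inv psd_matD(1) X Y rank by metis
  moreover assume "k_hyponym n k (supp_inv n Y) (supp_inv n X)"
  ultimately have "k_hyponym n k (supp_inv n (supp_inv n X)) (supp_inv n (supp_inv n Y))"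
    using k_hyponym_supp_inv_antitone psd_supp_inv X Y k by blast
  then show "k_hyponym n k X Y"
    using supp_inv_supp_inv psd_matD(1) X Y by metis
qed

theorem mainTheorem1:
  fixes n :: nat and A B :: "complex mat" and k :: real
  assumes "density_mat n A" and "density_mat n B"
    and "mat_rank n A = mat_rank n B"
    and "0 \<le> k" and "k \<le> 1"
  shows "k_hyponym n k A B \<longleftrightarrow> k_hyponym n k (supp_inv n B) (supp_inv n A)"
proof -
  have A: "psd_mat n A" and B: "psd_mat n B" using assms(1,2) by (simp_all add: density_mat_def)
  show ?thesis
  proof (cases "k = 0")
    case True
    then show ?thesis using k_hyponym_zero psd_matD(2) psd_supp_inv A B by metis
  next
    case False
    then show ?thesis using k_hyponym_supp_inv_iff[OF A B assms(3)] assms(4) by simp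
  qed
qed

end
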